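(* Let $Q$ be a convex polygon with finitely many sides and perimeter $L$. Parametrize its boundary by arc length $s$ measured from a fixed boundary point, let $P(s)$ be the boundary point at parameter $s$, and let $P'(s)=P(s+L/2)$ be the antipodal point. Let $\alpha(s)$ be the area of the part of $Q$ to the left of the directed line $P(s)P'(s)$ minus the area of the part to its right. Then $\alpha(s)$ is continuous and piecewise polynomial in $s$ of degree at most $2$. *)

theory Defs
  imports "HOL-Analysis.Analysis"
begin

definition cross2 :: "real^2 \<Rightarrow> real^2 \<Rightarrow> real" where
  "cross2 u v = u$1 * v$2 - u$2 * v$1"

text \<open>A convex polygon with n sides given by its vertices V 0, ..., V (n-1) listed in
  cyclic boundary order (indices taken mod n).  The orientation sign sigma is 1 for
  counterclockwise and -1 for clockwise order; strict convexity: every other vertex lies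
  strictly on one side of the line through each edge.\<close>
definition convex_polygon :: "(nat \<Rightarrow> real^2) \<Rightarrow> nat \<Rightarrow> real \<Rightarrow> bool" where
  "convex_polygon V n \<sigma> \<longleftrightarrow> n \<ge> 3 \<and> (\<sigma> = 1 \<or> \<sigma> = -1) \<and>
     (\<forall>i<n. \<forall>j<n. j \<noteq> i \<and> j \<noteq> Suc i mod n \<longrightarrow>
        \<sigma> * cross2 (V (Suc i mod n) - V i) (V j - V i) > 0)"

definition polygon_region :: "(nat \<Rightarrow> real^2) \<Rightarrow> nat \<Rightarrow> (real^2) set" where
  "polygon_region V n = convex hull (V ` {..<n})"

definition edge_len :: "(nat \<Rightarrow> real^2) \<Rightarrow> nat \<Rightarrow> nat \<Rightarrow> real" where
  "edge_len V n i = dist (V i) (V (Suc i mod n))"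

definition cum_len :: "(nat \<Rightarrow> real^2) \<Rightarrow> nat \<Rightarrow> nat \<Rightarrow> real" where
  "cum_len V n k = (\<Sum>i<k. edge_len V n i)"

definition perimeter :: "(nat \<Rightarrow> real^2) \<Rightarrow> nat \<Rightarrow> real" where
  "perimeter V n = cum_len V n n"

text \<open>Arc-length parametrization starting at V 0, for t in [0, L).\<close>
definition bdry_param0 :: "(nat \<Rightarrow> real^2) \<Rightarrow> nat \<Rightarrow> real \<Rightarrow> real^2" where
  "bdry_param0 V n t =
     (let i = (LEAST i. t < cum_len V n (Suc i))
      in V i + ((t - cum_len V n i) / edge_len V n i) *\<^sub>R (V (Suc i mod n) - V i))"

definition bdry_param :: "(nat \<Rightarrow> real^2) \<Rightarrow> nat \<Rightarrow> real \<Rightarrow> real^2" where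
  "bdry_param V n s =
     bdry_param0 V n (s - perimeter V n * of_int \<lfloor>s / perimeter V n\<rfloor>)"

definition area_diff :: "(real^2) set \<Rightarrow> real^2 \<Rightarrow> real^2 \<Rightarrow> real" where
  "area_diff Q p q =
     measure lebesgue (Q \<inter> {x. cross2 (q - p) (x - p) > 0})
   - measure lebesgue (Q \<inter> {x. cross2 (q - p) (x - p) < 0})"

end

theory Submission
  imports Defs "HOL-Library.Periodic_Fun"
begin

text \<open>If one endpoint of a chord \<open>p q\<close> slides along a boundary edge from \<open>p\<close> to \<open>p'\<close>,
  only the points of the triangle \<open>p p' q\<close> change sides, so the signed area difference changes
  by twice its signed area, \<open>cross2 (p' - p) (q - p)\<close>.  While neither \<open>P s\<close> nor its antipode
  \<open>P (s + L/2)\<close> passes a vertex, both move affinely in \<open>s\<close>; applying this to each endpoint in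
  turn shows that \<open>\<alpha>\<close> is quadratic there.  Only finitely many parameters per period are
  breakpoints, and continuity follows by gluing the pieces and periodicity.\<close>

section \<open>Chords and signed areas\<close>

lemma cross2_scaleR_decomp: "cross2 d u *\<^sub>R w = cross2 w u *\<^sub>R d + cross2 d w *\<^sub>R u"
  by (simp add: vec_eq_iff forall_2 cross2_def algebra_simps)

lemma cross2_eq_0_imp_parallel:
  assumes "cross2 d u = 0" "d \<noteq> 0"
  shows "\<exists>t. u = t *\<^sub>R d"
proof -
  define w :: "real^2" where "w = vector [- d$2, d$1]"
  have "cross2 d w \<noteq> 0"
    using assms(2) by (auto simp: w_def cross2_def vec_eq_iff forall_2 sum_squares_eq_zero_iff)
  have eq: "cross2 d w *\<^sub>R u = - cross2 w u *\<^sub>R d"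
    using cross2_scaleR_decomp[of d u w] assms(1) by (simp add: eq_neg_iff_add_eq_0 add.commute)
  have "u = (1 / cross2 d w) *\<^sub>R (cross2 d w *\<^sub>R u)" using \<open>cross2 d w \<noteq> 0\<close> by simp
  also have "\<dots> = (- cross2 w u / cross2 d w) *\<^sub>R d" unfolding eq by simp
  finally have "u = (- cross2 w u / cross2 d w) *\<^sub>R d" .
  then show ?thesis ..
qed

lemma negligible_cross2_level_set:
  assumes "v \<noteq> 0"
  shows "negligible {x::real^2. cross2 v (x - p) = c}"
proof -
  define w :: "real^2" where "w = vector [- v$2, v$1]"
  have "w \<noteq> 0" using assms by (auto simp: w_def vec_eq_iff forall_2)
  have "{x::real^2. cross2 v (x - p) = c} = {x. w \<bullet> x = c + cross2 v p}"
    by (auto simp: w_def cross2_def inner_vec_def sum_2 algebra_simps)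
  then show ?thesis using negligible_hyperplane[of w] \<open>w \<noteq> 0\<close> by simp
qed

lemma closed_segment_subset_affine_image:
  fixes A U :: "'a::real_vector"
  assumes "a \<le> b" and f: "\<And>t. t \<in> {a..b} \<Longrightarrow> f t = A + t *\<^sub>R U"
  shows "closed_segment (f a) (f b) \<subseteq> f ` {a..b}"
proof -
  have "closed_segment (t0 *\<^sub>R U) (t1 *\<^sub>R U) = (\<lambda>t. t *\<^sub>R U) ` closed_segment t0 t1" for t0 t1
    by (rule closed_segment_linear_image) (rule linear_scaleR_left)
  then have "closed_segment (f a) (f b) = (\<lambda>t. A + t *\<^sub>R U) ` {a..b}"
    using assms by (simp add: closed_segment_translation image_image closed_segment_eq_real_ivl1)
  also have "\<dots> = f ` {a..b}" using f by (intro image_cong) auto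
  finally show ?thesis by simp
qed

lemma cross2_affine_quadratic:
  "\<exists>a b c. \<forall>s::real. cross2 (X + s *\<^sub>R U) (Y + s *\<^sub>R W) = a + b * s + c * s\<^sup>2"
  by (intro exI[of _ "cross2 X Y"] exI[of _ "cross2 X W + cross2 U Y"] exI[of _ "cross2 U W"])
    (simp add: cross2_def algebra_simps power2_eq_square)

lemma mem_triangle_iff_cross2:
  assumes h: "cross2 (p2 - p1) (q - p1) > 0"
  shows "x \<in> convex hull {p1, p2, q} \<longleftrightarrow>
    cross2 (q - p1) (x - p1) \<le> 0 \<and> cross2 (p2 - p1) (x - p1) \<ge> 0 \<and> cross2 (q - p2) (x - p2) \<ge> 0"
proof -
  define d u where "d = p2 - p1" and "u = q - p1"
  define h a b where "h = cross2 d u" and "a = cross2 (x - p1) u" and "b = cross2 d (x - p1)"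
  have "h > 0" using assms by (simp add: h_def d_def u_def)
  have sides: "cross2 (q - p1) (x - p1) = - a" "cross2 (p2 - p1) (x - p1) = b"
    "cross2 (q - p2) (x - p2) = h - a - b"
    by (simp_all add: a_def b_def h_def d_def u_def cross2_def algebra_simps)
  have "x \<in> convex hull {p1, p2, q} \<longleftrightarrow> a \<ge> 0 \<and> b \<ge> 0 \<and> a + b \<le> h"
  proof
    assume "x \<in> convex hull {p1, p2, q}"
    then obtain r t where x: "x = p1 + r *\<^sub>R d + t *\<^sub>R u" "0 \<le> r" "0 \<le> t" "r + t \<le> 1"
      unfolding convex_hull_3_alt d_def u_def by auto
    have "a = r * h" "b = t * h" unfolding a_def b_def h_def x(1)
      by (simp_all add: cross2_def algebra_simps)
    moreover have "(r + t) * h \<le> 1 * h" using x(4) \<open>h > 0\<close> by (intro mult_right_mono) auto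
    ultimately show "a \<ge> 0 \<and> b \<ge> 0 \<and> a + b \<le> h"
      using x \<open>h > 0\<close> by (simp add: algebra_simps)
  next
    assume abh: "a \<ge> 0 \<and> b \<ge> 0 \<and> a + b \<le> h"
    have "x = p1 + (1/h) *\<^sub>R (h *\<^sub>R (x - p1))" using \<open>h > 0\<close> by simp
    also have "h *\<^sub>R (x - p1) = a *\<^sub>R d + b *\<^sub>R u"
      unfolding h_def a_def b_def by (rule cross2_scaleR_decomp)
    finally have "x = p1 + (a / h) *\<^sub>R d + (b / h) *\<^sub>R u"
      by (simp add: scaleR_add_right)
    moreover have "a / h + b / h \<le> 1"
      using abh \<open>h > 0\<close> by (simp add: add_divide_distrib[symmetric])
    ultimately show "x \<in> convex hull {p1, p2, q}" unfolding convex_hull_3_alt d_def u_def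
      using abh \<open>h > 0\<close> divide_nonneg_pos[of a h] divide_nonneg_pos[of b h] by blast
  qed
  then show ?thesis unfolding sides by linarith
qed

lemma measure_triangle_cross2:
  "measure lebesgue (convex hull {p1, p2, q}) = \<bar>cross2 (p2 - p1) (q - p1)\<bar> / 2"
proof -
  have "compact (convex hull {p1, p2, q})" by (intro finite_imp_compact_convex_hull) auto
  then have "measure lebesgue (convex hull {p1, p2, q}) = measure lborel (convex hull {p1, p2, q})"
    by (intro measure_completion) (auto dest: compact_imp_closed)
  then show ?thesis unfolding Simplex_Content.content_triangle
    by (simp add: cross2_def algebra_simps)
qed

definition chord_side_indicator :: "(real^2) set \<Rightarrow> real^2 \<Rightarrow> real^2 \<Rightarrow> real^2 \<Rightarrow> real" where
  "chord_side_indicator Q p q x = indicator (Q \<inter> {x. cross2 (q - p) (x - p) > 0}) x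
     - indicator (Q \<inter> {x. cross2 (q - p) (x - p) < 0}) x"

lemma has_integral_chord_side_indicator:
  assumes "Q \<in> lmeasurable"
  shows "(chord_side_indicator Q p q has_integral area_diff Q p q) UNIV"
proof -
  have "open {x::real^2. cross2 (q - p) (x - p) > 0}" "open {x::real^2. cross2 (q - p) (x - p) < 0}"
    unfolding cross2_def by (intro open_Collect_less continuous_intros)+
  then have "Q \<inter> {x. cross2 (q - p) (x - p) > 0} \<in> lmeasurable"
    "Q \<inter> {x. cross2 (q - p) (x - p) < 0} \<in> lmeasurable"
    by (intro fmeasurable_Int_fmeasurable assms borel_open, simp)+
  then show ?thesis unfolding chord_side_indicator_def area_diff_def lmeasurable_iff_has_integral
    by (intro has_integral_diff)
qed

lemma cross2_apex_wedge_nonpos: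
  assumes h: "cross2 (p2 - p1) (q - p1) > 0"
    and E: "cross2 e (p1 - q) \<ge> 0" "cross2 e (p2 - q) \<ge> 0"
    and x: "cross2 (q - p1) (x - p1) > 0" "cross2 (q - p2) (x - p2) < 0"
  shows "cross2 e (x - q) \<le> 0"
proof -
  have "cross2 (p2 - p1) (q - p1) * cross2 e (x - q) =
      cross2 (q - p2) (x - p2) * cross2 e (p1 - q) - cross2 (q - p1) (x - p1) * cross2 e (p2 - q)"
    by (simp add: cross2_def algebra_simps)
  also have "\<dots> \<le> 0"
    using mult_nonpos_nonneg[of "cross2 (q - p2) (x - p2)" "cross2 e (p1 - q)"]
      mult_nonneg_nonneg[of "cross2 (q - p1) (x - p1)" "cross2 e (p2 - q)"] E x by linarith
  finally show ?thesis using h by (simp add: mult_le_0_iff)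
qed

text \<open>Off the three lines in the hypotheses, the points changing sides are exactly those of
  the triangle \<open>p1 p2 q\<close>; the supporting line through \<open>q\<close> excludes the opposite wedge at
  \<open>q\<close>, where the change would have the other sign.\<close>

lemma chord_side_indicator_shift_start:
  assumes "convex Q" "p1 \<in> Q" "p2 \<in> Q" "q \<in> Q"
    and left: "\<forall>x\<in>Q. cross2 (p2 - p1) (x - p1) \<ge> 0"
    and supp: "\<forall>x\<in>Q. cross2 e (x - q) \<ge> 0"
    and h: "cross2 (p2 - p1) (q - p1) > 0"
    and generic: "cross2 (q - p1) (x - p1) \<noteq> 0" "cross2 (q - p2) (x - p2) \<noteq> 0" "cross2 e (x - q) \<noteq> 0"
  shows "chord_side_indicator Q p2 q x - chord_side_indicator Q p1 q x =
    2 * indicator (convex hull {p1, p2, q}) x"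
proof (cases "x \<in> Q")
  case False
  moreover have "convex hull {p1, p2, q} \<subseteq> Q" using assms(1-4) by (intro hull_minimal) auto
  ultimately show ?thesis by (auto simp: chord_side_indicator_def indicator_def)
next
  case True
  define c1 c2 where "c1 = cross2 (q - p1) (x - p1)" and "c2 = cross2 (q - p2) (x - p2)"
  have "\<not> (c1 > 0 \<and> c2 < 0)"
    using cross2_apex_wedge_nonpos[OF h, of e x] supp True assms(2,3) generic(3)
    unfolding c1_def c2_def by force
  moreover have "x \<in> convex hull {p1, p2, q} \<longleftrightarrow> c1 \<le> 0 \<and> c2 \<ge> 0"
    using mem_triangle_iff_cross2[OF h, of x] left True by (simp add: c1_def c2_def)
  ultimately show ?thesis using True generic(1,2)
    unfolding chord_side_indicator_def indicator_def c1_def c2_def by auto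
qed

lemma area_diff_shift_start_pos:
  assumes "Q \<in> lmeasurable" "convex Q" "p1 \<in> Q" "p2 \<in> Q" "q \<in> Q"
    and left: "\<forall>x\<in>Q. cross2 (p2 - p1) (x - p1) \<ge> 0"
    and "e \<noteq> 0" and supp: "\<forall>x\<in>Q. cross2 e (x - q) \<ge> 0"
    and h: "cross2 (p2 - p1) (q - p1) > 0"
  shows "area_diff Q p2 q - area_diff Q p1 q = cross2 (p2 - p1) (q - p1)"
proof -
  define T where "T = convex hull {p1, p2, q}"
  define N where "N = {x. cross2 (q - p1) (x - p1) = 0} \<union> {x. cross2 (q - p2) (x - p2) = 0}
    \<union> {x. cross2 e (x - q) = 0}"
  have "q - p1 \<noteq> 0" "q - p2 \<noteq> 0" using h by (auto simp: cross2_def)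
  then have "negligible N" unfolding N_def
    using negligible_cross2_level_set \<open>e \<noteq> 0\<close> by (intro negligible_Un) auto
  have "compact T" unfolding T_def by (intro finite_imp_compact_convex_hull) auto
  then have "((\<lambda>x. 2 * indicator T x) has_integral 2 * measure lebesgue T) UNIV"
    using lmeasurable_compact lmeasurable_iff_has_integral by (blast intro: has_integral_mult_right)
  then have "((\<lambda>x. chord_side_indicator Q p2 q x - chord_side_indicator Q p1 q x)
      has_integral 2 * measure lebesgue T) UNIV"
    by (rule has_integral_spike[OF \<open>negligible N\<close>, rotated])
      (use chord_side_indicator_shift_start[OF assms(2-5) left supp h] in \<open>auto simp: N_def T_def\<close>)
  moreover have "((\<lambda>x. chord_side_indicator Q p2 q x - chord_side_indicator Q p1 q x)
      has_integral area_diff Q p2 q - area_diff Q p1 q) UNIV"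
    by (intro has_integral_diff has_integral_chord_side_indicator assms)
  ultimately have "area_diff Q p2 q - area_diff Q p1 q = 2 * measure lebesgue T"
    using has_integral_unique by blast
  then show ?thesis using h by (simp add: T_def measure_triangle_cross2)
qed

lemma area_diff_shift_start_collinear:
  assumes "cross2 (p2 - p1) (q - p1) = 0" "q \<notin> closed_segment p1 p2"
  shows "area_diff Q p2 q = area_diff Q p1 q"
proof (cases "p2 = p1")
  case False
  then obtain t where t: "q - p1 = t *\<^sub>R (p2 - p1)"
    using cross2_eq_0_imp_parallel assms(1) by force
  have "t < 0 \<or> t > 1"
  proof (rule ccontr)
    assume "\<not> (t < 0 \<or> t > 1)"
    moreover have "q = (1 - t) *\<^sub>R p1 + t *\<^sub>R p2" using t by (simp add: algebra_simps)
    ultimately have "q \<in> closed_segment p1 p2" unfolding closed_segment_def by auto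
    with assms(2) show False by simp
  qed
  moreover have "cross2 (q - p1) (x - p1) = t * cross2 (p2 - p1) (x - p1)" for x
    unfolding t by (simp add: cross2_def algebra_simps)
  moreover have "cross2 (q - p2) (x - p2) = (t - 1) * cross2 (p2 - p1) (x - p1)" for x
  proof -
    have q2: "q - p2 = (t - 1) *\<^sub>R (p2 - p1)" using t by (simp add: algebra_simps)
    show ?thesis unfolding q2 by (simp add: cross2_def algebra_simps)
  qed
  ultimately have "{x. cross2 (q - p2) (x - p2) > 0} = {x. cross2 (q - p1) (x - p1) > 0}"
    "{x. cross2 (q - p2) (x - p2) < 0} = {x. cross2 (q - p1) (x - p1) < 0}"
    by (auto simp: zero_less_mult_iff mult_less_0_iff)
  then show ?thesis unfolding area_diff_def by simp
qed simp

lemma area_diff_shift_start: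
  assumes "Q \<in> lmeasurable" "convex Q" "p1 \<in> Q" "p2 \<in> Q" "q \<in> Q"
    and one_side: "(\<forall>x\<in>Q. cross2 (p2 - p1) (x - p1) \<ge> 0) \<or> (\<forall>x\<in>Q. cross2 (p2 - p1) (x - p1) \<le> 0)"
    and "e \<noteq> 0" "\<forall>x\<in>Q. cross2 e (x - q) \<ge> 0"
    and "q \<notin> closed_segment p1 p2"
  shows "area_diff Q p2 q - area_diff Q p1 q = cross2 (p2 - p1) (q - p1)"
proof (cases "cross2 (p2 - p1) (q - p1) = 0")
  case True
  then show ?thesis using area_diff_shift_start_collinear assms(9) by simp
next
  case False
  have flip: "cross2 (p1 - p2) (x - p2) = - cross2 (p2 - p1) (x - p1)" for x
    by (simp add: cross2_def algebra_simps)
  from one_side show ?thesis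
  proof
    assume left: "\<forall>x\<in>Q. cross2 (p2 - p1) (x - p1) \<ge> 0"
    then have "cross2 (p2 - p1) (q - p1) > 0" using False \<open>q \<in> Q\<close> by force
    with left show ?thesis using area_diff_shift_start_pos assms(1-5,7,8) by blast
  next
    assume "\<forall>x\<in>Q. cross2 (p2 - p1) (x - p1) \<le> 0"
    then have left: "\<forall>x\<in>Q. cross2 (p1 - p2) (x - p2) \<ge> 0" by (simp add: flip)
    then have "cross2 (p1 - p2) (q - p2) > 0" using False \<open>q \<in> Q\<close> flip by force
    with left have "area_diff Q p1 q - area_diff Q p2 q = cross2 (p1 - p2) (q - p2)"
      using area_diff_shift_start_pos[of Q p2 p1 q] assms(1-5,7,8) by blast
    then show ?thesis using flip[of q] by simp
  qed
qed

lemma area_diff_swap: "area_diff Q q p = - area_diff Q p q"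
proof -
  have "cross2 (p - q) (x - q) = - cross2 (q - p) (x - p)" for x
    by (simp add: cross2_def algebra_simps)
  then show ?thesis unfolding area_diff_def by (simp add: neg_less_0_iff_less)
qed

section \<open>Piecewise functions on the real line\<close>

lemma finite_set_consecutive_enumeration:
  fixes B :: "'a::linorder set"
  assumes "finite B" "B \<subseteq> {a..b}" "a \<in> B" "b \<in> B"
  shows "\<exists>t m. t 0 = a \<and> t m = b \<and> (\<forall>k<m. t k < t (Suc k)) \<and> (\<forall>k\<le>m. t k \<in> B) \<and>
    (\<forall>k<m. \<forall>x\<in>B. \<not> (t k < x \<and> x < t (Suc k)))"
proof -
  obtain xs where xs: "sorted_wrt (<) xs" "set xs = B"
    using ex1_sorted_list_for_set_if_finite[OF assms(1)] by blast
  have le: "xs ! p \<le> xs ! q" if "p \<le> q" "q < length xs" for p q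
    using sorted_wrt_nth_less[OF xs(1), of p q] that by (cases "p = q") auto
  have mem: "xs ! p \<in> B" if "p < length xs" for p using xs(2) that by auto
  obtain pa pb where "pa < length xs" "xs ! pa = a" "pb < length xs" "xs ! pb = b"
    using assms(3,4) xs(2) by (metis in_set_conv_nth)
  define m where "m = length xs - 1"
  have lm: "length xs = Suc m" using \<open>pa < length xs\<close> by (simp add: m_def)
  have "xs ! 0 = a"
    using le[of 0 pa] mem[of 0] assms(2) lm \<open>pa < length xs\<close> \<open>xs ! pa = a\<close> by (auto intro: antisym)
  moreover have "xs ! m = b"
    using le[of pb m] mem[of m] assms(2) lm \<open>pb < length xs\<close> \<open>xs ! pb = b\<close> by (auto intro: antisym)
  moreover have "\<forall>k<m. xs ! k < xs ! Suc k"
    using sorted_wrt_nth_less[OF xs(1)] lm by simp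
  moreover have "\<forall>k\<le>m. xs ! k \<in> B" using mem lm by simp
  moreover have "\<forall>k<m. \<forall>x\<in>B. \<not> (xs ! k < x \<and> x < xs ! Suc k)"
  proof (intro allI impI ballI)
    fix k x assume "k < m" "x \<in> B"
    then obtain p where "p < length xs" "xs ! p = x" using xs(2) by (metis in_set_conv_nth)
    then show "\<not> (xs ! k < x \<and> x < xs ! Suc k)"
      using le[of p k] le[of "Suc k" p] \<open>k < m\<close> lm by (cases "p \<le> k") auto
  qed
  ultimately show ?thesis by blast
qed

lemma continuous_on_chain_of_intervals:
  fixes f :: "real \<Rightarrow> 'b::topological_space"
  assumes "\<And>k. k < m \<Longrightarrow> t k < t (Suc k)" "\<And>k. k < m \<Longrightarrow> continuous_on {t k..t (Suc k)} f"
  shows "continuous_on {t 0..t m} f"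
proof -
  have "t 0 \<le> t m \<and> continuous_on {t 0..t m} f"
    using assms
  proof (induction m)
    case (Suc m)
    then have "t 0 \<le> t m" "t m < t (Suc m)" "continuous_on {t 0..t m} f" by auto
    moreover have "{t 0..t (Suc m)} = {t 0..t m} \<union> {t m..t (Suc m)}"
      using \<open>t 0 \<le> t m\<close> \<open>t m < t (Suc m)\<close> by auto
    ultimately show ?case using Suc.prems by (auto intro!: continuous_on_closed_Un)
  qed simp
  then show ?thesis ..
qed

lemma continuous_on_UNIV_if_periodic:
  fixes f :: "real \<Rightarrow> 'b::topological_space"
  assumes "L > 0" and periodic: "\<And>s. f (s + L) = f s" and cont: "continuous_on {0..L} f"
  shows "continuous_on UNIV f"
proof -
  interpret periodic_fun_simple f L by standard (rule periodic)
  have "continuous_on {-L..0} (\<lambda>z. f (z + L))"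
    by (rule continuous_on_compose2[OF cont]) (auto intro!: continuous_intros)
  then have "continuous_on ({-L..0} \<union> {0..L}) f"
    using cont periodic by (intro continuous_on_closed_Un) auto
  moreover have "{-L..0} \<union> {0..L} = {-L..L}" using \<open>L > 0\<close> by auto
  ultimately have cont_sym: "continuous_on {-L..L} f" by simp
  show ?thesis
  proof (rule continuous_at_imp_continuous_on, intro ballI)
    fix x :: real
    define j where "j = \<lfloor>x / L\<rfloor>"
    have "of_int j * L \<le> x" "x < (of_int j + 1) * L"
      using floor_divide_lower[OF \<open>L > 0\<close>] floor_divide_upper[OF \<open>L > 0\<close>] by (auto simp: j_def)
    then have "x - of_int j * L \<in> {-L<..<L}" using \<open>L > 0\<close> by (auto simp: algebra_simps)
    then have "isCont f (x - of_int j * L)" using continuous_on_interior[OF cont_sym] by simp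
    moreover have "isCont (\<lambda>z. z - of_int j * L) x" by (intro continuous_intros)
    ultimately have "isCont (\<lambda>z. f (z - of_int j * L)) x" by (rule isCont_o2[rotated])
    moreover have "f (z - of_int j * L) = f z" for z using plus_of_int[of z "- j"] by simp
    ultimately show "isCont f x" by simp
  qed
qed

section \<open>Convex polygons and their arc-length parametrization\<close>

lemma cum_len_0 [simp]: "cum_len V n 0 = 0"
  by (simp add: cum_len_def)

lemma cum_len_Suc: "cum_len V n (Suc k) = cum_len V n k + edge_len V n k"
  by (simp add: cum_len_def)

lemma cum_len_mono: "k \<le> m \<Longrightarrow> cum_len V n k \<le> cum_len V n m"
  unfolding cum_len_def edge_len_def by (intro sum_mono2) auto

definition vertex_params :: "(nat \<Rightarrow> real^2) \<Rightarrow> nat \<Rightarrow> real \<Rightarrow> real set" where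
  "vertex_params V n w = {s. \<exists>k\<le>n. \<exists>j::int. w + s = cum_len V n k + of_int j * perimeter V n}"

definition antipodal_area_diff :: "(nat \<Rightarrow> real^2) \<Rightarrow> nat \<Rightarrow> real \<Rightarrow> real \<Rightarrow> real" where
  "antipodal_area_diff V n w s = area_diff (polygon_region V n)
     (bdry_param V n (w + s)) (bdry_param V n (w + s + perimeter V n / 2))"

locale convex_ngon =
  fixes V :: "nat \<Rightarrow> real^2" and n :: nat and \<sigma> :: real
  assumes convex_polygon: "convex_polygon V n \<sigma>"
begin

abbreviation E :: "nat \<Rightarrow> real^2" where "E i \<equiv> V (Suc i mod n) - V i"
abbreviation cum :: "nat \<Rightarrow> real" where "cum k \<equiv> cum_len V n k"
abbreviation L :: real where "L \<equiv> perimeter V n"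
abbreviation Q :: "(real^2) set" where "Q \<equiv> polygon_region V n"

lemma n_ge_3: "n \<ge> 3" and orientation: "\<sigma> = 1 \<or> \<sigma> = -1"
  and other_vertex_strictly_left:
    "\<And>i j. i < n \<Longrightarrow> j < n \<Longrightarrow> j \<noteq> i \<Longrightarrow> j \<noteq> Suc i mod n \<Longrightarrow>
      \<sigma> * cross2 (E i) (V j - V i) > 0"
  using convex_polygon unfolding convex_polygon_def by auto

lemma edge_nonzero:
  assumes "i < n"
  shows "E i \<noteq> 0"
proof -
  have "\<not> {..<n} \<subseteq> {i, Suc i mod n}"
  proof
    assume "{..<n} \<subseteq> {i, Suc i mod n}"
    then have "card {..<n} \<le> card {i, Suc i mod n}" by (intro card_mono) auto
    also have "\<dots> \<le> 2" by (simp add: card_insert_if)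
    finally show False using n_ge_3 by simp
  qed
  then obtain j where "j < n" "j \<noteq> i" "j \<noteq> Suc i mod n" by auto
  from other_vertex_strictly_left[OF assms this] show ?thesis by (auto simp: cross2_def)
qed

lemma edge_len_pos: "i < n \<Longrightarrow> edge_len V n i > 0"
  using edge_nonzero unfolding edge_len_def by (metis dist_pos_lt right_minus_eq)

lemma cum_strict_mono:
  assumes "k < m" "m \<le> n"
  shows "cum k < cum m"
proof -
  have "cum k \<le> cum (m - 1)" using assms by (intro cum_len_mono) auto
  also have "\<dots> < cum (m - 1) + edge_len V n (m - 1)" using edge_len_pos[of "m - 1"] assms by simp
  also have "\<dots> = cum m" using cum_len_Suc[of V n "m - 1"] assms by simp
  finally show ?thesis .
qed

lemma perimeter_pos: "L > 0"
  using cum_strict_mono[of 0 n] n_ge_3 by (simp add: perimeter_def)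

lemma cum_interval_exists:
  assumes "0 \<le> t" "t < L"
  shows "\<exists>i<n. cum i \<le> t \<and> t < cum (Suc i)"
proof -
  define i where "i = (LEAST k. t < cum (Suc k))"
  have ex: "t < cum (Suc (n - 1))" using assms n_ge_3 by (simp add: perimeter_def)
  have "t < cum (Suc i)" unfolding i_def by (rule LeastI[of "\<lambda>k. t < cum (Suc k)", OF ex])
  moreover have "i < n" using Least_le[of "\<lambda>k. t < cum (Suc k)", OF ex] n_ge_3
    unfolding i_def by simp
  moreover have "cum i \<le> t"
  proof (cases i)
    case (Suc k)
    then show ?thesis using not_less_Least[of k "\<lambda>k. t < cum (Suc k)"] unfolding i_def by simp
  qed (use assms in simp)
  ultimately show ?thesis by blast
qed

lemma bdry_param0_on_edge:
  assumes "i < n" "cum i \<le> t" "t < cum (Suc i)"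
  shows "bdry_param0 V n t = V i + ((t - cum i) / edge_len V n i) *\<^sub>R E i"
proof -
  have "(LEAST k. t < cum (Suc k)) = i"
  proof (rule Least_equality)
    fix k assume "t < cum (Suc k)"
    then show "i \<le> k" using cum_len_mono[of "Suc k" i V n] assms(2) by linarith
  qed fact
  then show ?thesis unfolding bdry_param0_def Let_def by simp
qed

lemma bdry_param_periodic: "bdry_param V n (a + of_int j * L) = bdry_param V n a"
proof -
  have "(a + of_int j * L) / L = a / L + of_int j" using perimeter_pos by (simp add: field_simps)
  then have "\<lfloor>(a + of_int j * L) / L\<rfloor> = \<lfloor>a / L\<rfloor> + j" by simp
  then show ?thesis unfolding bdry_param_def by (simp add: algebra_simps)
qed

lemma mod_perimeter_bounds: "0 \<le> a - L * of_int \<lfloor>a / L\<rfloor>" "a - L * of_int \<lfloor>a / L\<rfloor> < L"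
proof -
  have "of_int \<lfloor>a / L\<rfloor> * L \<le> a" "a < (of_int \<lfloor>a / L\<rfloor> + 1) * L"
    using floor_divide_lower[OF perimeter_pos] floor_divide_upper[OF perimeter_pos] by auto
  then show "0 \<le> a - L * of_int \<lfloor>a / L\<rfloor>" "a - L * of_int \<lfloor>a / L\<rfloor> < L"
    by (auto simp: field_simps)
qed

lemma bdry_param_eq_bdry_param0:
  assumes "0 \<le> t" "t < L"
  shows "bdry_param V n t = bdry_param0 V n t"
proof -
  have "\<lfloor>t / L\<rfloor> = 0" using assms perimeter_pos by (simp add: floor_eq_iff)
  then show ?thesis unfolding bdry_param_def by simp
qed

lemma bdry_param_on_edge:
  assumes "i < n" "cum i \<le> x" "x \<le> cum (Suc i)"
  shows "bdry_param V n (x + of_int j * L) = V i + ((x - cum i) / edge_len V n i) *\<^sub>R E i"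
proof (cases "x < cum (Suc i)")
  case True
  moreover have "0 \<le> x" "x < L"
    using cum_len_mono[of 0 i V n] cum_len_mono[of "Suc i" n V n] assms True
    by (auto simp: perimeter_def)
  ultimately show ?thesis
    using assms bdry_param_periodic bdry_param_eq_bdry_param0 bdry_param0_on_edge by simp
next
  case False
  then have x: "x = cum (Suc i)" using assms by simp
  have "V i + ((x - cum i) / edge_len V n i) *\<^sub>R E i = V (Suc i mod n)"
    using edge_len_pos[OF assms(1)] by (simp add: x cum_len_Suc)
  moreover have "bdry_param V n (x + of_int j * L) = V (Suc i mod n)"
  proof (cases "Suc i < n")
    case True
    have "cum (Suc i) < cum (Suc (Suc i))" "cum (Suc (Suc i)) \<le> L"
      using cum_strict_mono[of "Suc i" "Suc (Suc i)"] cum_len_mono[of "Suc (Suc i)" n V n] True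
      by (auto simp: perimeter_def)
    moreover have "0 \<le> cum (Suc i)" using cum_len_mono[of 0 "Suc i" V n] by simp
    ultimately have "bdry_param V n x = V (Suc i)"
      using bdry_param_eq_bdry_param0 bdry_param0_on_edge[OF True] by (simp add: x)
    then show ?thesis using bdry_param_periodic True by simp
  next
    case False
    then have "Suc i = n" using assms by simp
    then have "x + of_int j * L = 0 + of_int (j + 1) * L" by (simp add: x perimeter_def algebra_simps)
    then have "bdry_param V n (x + of_int j * L) = bdry_param V n 0"
      by (simp only: bdry_param_periodic)
    also have "\<dots> = V 0"
      using bdry_param_eq_bdry_param0[of 0] bdry_param0_on_edge[of 0 0] perimeter_pos n_ge_3
        cum_strict_mono[of 0 1]
      by simp
    finally show ?thesis using \<open>Suc i = n\<close> by simp
  qed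
  ultimately show ?thesis by simp
qed

lemma bdry_param_on_some_edge:
  obtains j m where "j < n" "0 \<le> m" "m \<le> 1" "bdry_param V n y = V j + m *\<^sub>R E j"
proof -
  define t where "t = y - L * of_int \<lfloor>y / L\<rfloor>"
  obtain j where j: "j < n" "cum j \<le> t" "t < cum (Suc j)"
    using cum_interval_exists mod_perimeter_bounds unfolding t_def by blast
  then have "0 \<le> (t - cum j) / edge_len V n j" "(t - cum j) / edge_len V n j \<le> 1"
    using edge_len_pos[OF j(1)] by (auto simp: cum_len_Suc divide_simps)
  moreover have "bdry_param V n y = V j + ((t - cum j) / edge_len V n j) *\<^sub>R E j"
    using bdry_param0_on_edge[OF j] unfolding bdry_param_def t_def by simp
  ultimately show thesis using j(1) that by blast
qed

lemma polygon_region_convex: "convex Q"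
  unfolding polygon_region_def by simp

lemma polygon_region_lmeasurable: "Q \<in> lmeasurable"
  unfolding polygon_region_def by (intro lmeasurable_compact finite_imp_compact_convex_hull) auto

lemma vertex_in_polygon_region: "j < n \<Longrightarrow> V j \<in> Q"
  unfolding polygon_region_def by (intro hull_inc) auto

lemma edge_point_in_polygon_region:
  assumes "i < n" "0 \<le> l" "l \<le> 1"
  shows "V i + l *\<^sub>R E i \<in> Q"
proof -
  have "V i + l *\<^sub>R E i = (1 - l) *\<^sub>R V i + l *\<^sub>R V (Suc i mod n)" by (simp add: algebra_simps)
  also have "\<dots> \<in> Q"
    using assms n_ge_3 vertex_in_polygon_region polygon_region_convex by (intro convexD) auto
  finally show ?thesis .
qed

lemma polygon_region_left_of_edge:
  assumes "i < n" "x \<in> Q"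
  shows "\<sigma> * cross2 (E i) (x - V i) \<ge> 0"
proof -
  define f where "f y = \<sigma> * cross2 (E i) (y - V i)" for y
  have f_affine: "f ((1 - u) *\<^sub>R y + u *\<^sub>R z) = (1 - u) * f y + u * f z" for u y z
    by (simp add: f_def cross2_def algebra_simps)
  have "convex {y. f y \<ge> 0}"
    unfolding convex_alt using f_affine by simp
  moreover have "V j \<in> {y. f y \<ge> 0}" if "j < n" for j
  proof (cases "j = i \<or> j = Suc i mod n")
    case True
    then show ?thesis by (auto simp: f_def cross2_def)
  next
    case False
    then show ?thesis using other_vertex_strictly_left[OF assms(1) that] by (simp add: f_def)
  qed
  ultimately have "Q \<subseteq> {y. f y \<ge> 0}" unfolding polygon_region_def by (intro hull_minimal) auto
  then show ?thesis using assms(2) by (auto simp: f_def)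
qed

text \<open>A common point lies on the supporting line of edge \<open>i\<close>, which meets the polygon only in
  that edge; hence \<open>i' = i\<close>, or edge \<open>i'\<close> starts at the excluded endpoint of edge \<open>i\<close>.\<close>

lemma edge_points_inj:
  assumes "i < n" "i' < n" "0 \<le> l" "l < 1" "0 \<le> m" "m < 1"
    and eq: "V i + l *\<^sub>R E i = V i' + m *\<^sub>R E i'"
  shows "i = i' \<and> l = m"
proof (cases "i = i'")
  case True
  then show ?thesis using eq edge_nonzero[OF assms(1)] by simp
next
  case False
  define f where "f y = \<sigma> * cross2 (E i) (y - V i)" for y
  define j where "j = Suc i' mod n"
  have "j < n" using n_ge_3 by (simp add: j_def)
  have f_nonneg: "f (V k) \<ge> 0" if "k < n" for k
    unfolding f_def using polygon_region_left_of_edge assms(1) vertex_in_polygon_region that by blast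
  have "0 = f (V i + l *\<^sub>R E i)" by (simp add: f_def cross2_def algebra_simps)
  also have "\<dots> = (1 - m) * f (V i') + m * f (V j)"
    unfolding eq by (simp add: f_def j_def cross2_def algebra_simps)
  finally have sum0: "(1 - m) * f (V i') + m * f (V j) = 0" ..
  moreover have "(1 - m) * f (V i') \<ge> 0" "m * f (V j) \<ge> 0"
    using f_nonneg assms \<open>j < n\<close> by simp_all
  ultimately have "f (V i') = 0" using assms(6) by (simp add: add_nonneg_eq_0_iff)
  then have i': "i' = Suc i mod n"
    using other_vertex_strictly_left[OF assms(1,2)] False unfolding f_def by force
  then have "j \<noteq> i" "j \<noteq> Suc i mod n"
    using n_ge_3 assms(1) by (auto simp: j_def mod_Suc split: if_splits)
  then have "f (V j) > 0" unfolding f_def using other_vertex_strictly_left[OF assms(1) \<open>j < n\<close>] by simp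
  then have "m = 0" using sum0 \<open>(1 - m) * f (V i') \<ge> 0\<close> \<open>m * f (V j) \<ge> 0\<close>
    by (simp add: add_nonneg_eq_0_iff)
  then have "(1 - l) *\<^sub>R E i = 0" using eq i' by (simp add: algebra_simps)
  then show ?thesis using edge_nonzero[OF assms(1)] assms(4) by simp
qed

lemma bdry_param0_inj_on: "inj_on (bdry_param0 V n) {0..<L}"
proof
  fix t1 t2 assume t: "t1 \<in> {0..<L}" "t2 \<in> {0..<L}" and eq: "bdry_param0 V n t1 = bdry_param0 V n t2"
  obtain i i' where i: "i < n" "cum i \<le> t1" "t1 < cum (Suc i)"
    and i': "i' < n" "cum i' \<le> t2" "t2 < cum (Suc i')"
    using cum_interval_exists t by (meson atLeastLessThan_iff)
  define e e' where "e = edge_len V n i" and "e' = edge_len V n i'"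
  have "e > 0" "e' > 0" using edge_len_pos i i' by (auto simp: e_def e'_def)
  have "0 \<le> (t1 - cum i) / e" "(t1 - cum i) / e < 1" "0 \<le> (t2 - cum i') / e'" "(t2 - cum i') / e' < 1"
    using i i' \<open>e > 0\<close> \<open>e' > 0\<close> by (auto simp: e_def e'_def cum_len_Suc divide_simps)
  moreover have "V i + ((t1 - cum i) / e) *\<^sub>R E i = V i' + ((t2 - cum i') / e') *\<^sub>R E i'"
    using eq bdry_param0_on_edge i i' by (simp add: e_def e'_def)
  ultimately have "i = i'" "(t1 - cum i) / e = (t2 - cum i') / e'"
    using edge_points_inj[OF i(1) i'(1)] by blast+
  then show "t1 = t2" using \<open>e > 0\<close> by (simp add: e_def e'_def divide_simps)
qed

lemma bdry_param_eq_imp_eq: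
  assumes "bdry_param V n a = bdry_param V n b" "\<bar>a - b\<bar> < L"
  shows "a = b"
proof -
  define k where "k = \<lfloor>a / L\<rfloor> - \<lfloor>b / L\<rfloor>"
  have "a - L * of_int \<lfloor>a / L\<rfloor> = b - L * of_int \<lfloor>b / L\<rfloor>"
    using inj_onD[OF bdry_param0_inj_on] assms(1) mod_perimeter_bounds
    unfolding bdry_param_def by simp
  then have "a - b = L * of_int k" by (simp add: k_def algebra_simps)
  then have "\<bar>of_int k\<bar> < (1::real)" using assms(2) perimeter_pos by (simp add: abs_mult)
  then have "k = 0" by linarith
  then show ?thesis using \<open>a - b = L * of_int k\<close> by simp
qed

lemma bdry_param_on_edge_interval:
  assumes "a0 < a1" and no_vertex: "{a0<..<a1} \<inter> vertex_params V n w = {}"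
  obtains i \<beta> where "i < n"
    "\<And>s. s \<in> {a0..a1} \<Longrightarrow> \<beta> \<le> s \<and> s \<le> \<beta> + edge_len V n i \<and>
       bdry_param V n (w + s) = V i + ((s - \<beta>) / edge_len V n i) *\<^sub>R E i"
proof -
  define m j where "m = (a0 + a1) / 2" and "j = \<lfloor>(w + m) / L\<rfloor>"
  obtain i where i: "i < n" "cum i \<le> w + m - of_int j * L" "w + m - of_int j * L < cum (Suc i)"
    using cum_interval_exists[OF mod_perimeter_bounds[of "w + m"]] by (auto simp: j_def mult.commute)
  define \<beta> where "\<beta> = cum i + of_int j * L - w"
  have hit: "w + s = cum k + of_int j * L \<Longrightarrow> k \<le> n \<Longrightarrow> s \<notin> {a0<..<a1}" for s k
    using no_vertex unfolding vertex_params_def by blast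
  have in_edge: "\<beta> \<le> s \<and> s \<le> \<beta> + edge_len V n i" if "s \<in> {a0..a1}" for s
  proof (rule ccontr)
    assume "\<not> ?thesis"
    then consider "s < \<beta>" | "\<beta> + edge_len V n i < s" by linarith
    then show False
    proof cases
      case 1
      have "\<beta> \<in> {a0<..<a1}" using 1 i(2) that assms(1) unfolding \<beta>_def m_def by (auto simp: field_simps)
      then show False using hit[of \<beta> i] i(1) by (simp add: \<beta>_def)
    next
      case 2
      have "\<beta> + edge_len V n i \<in> {a0<..<a1}"
        using 2 i(3) that assms(1) unfolding \<beta>_def m_def cum_len_Suc by (auto simp: field_simps)
      then show False using hit[of "\<beta> + edge_len V n i" "Suc i"] i(1)
        by (simp add: \<beta>_def cum_len_Suc)
    qed
  qed
  have "bdry_param V n (w + s) = V i + ((s - \<beta>) / edge_len V n i) *\<^sub>R E i" if "s \<in> {a0..a1}" for s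
    using bdry_param_on_edge[OF i(1), of "s - \<beta> + cum i" j] in_edge[OF that]
    by (simp add: \<beta>_def cum_len_Suc algebra_simps)
  with in_edge show thesis by (intro that[OF i(1)]) blast
qed

lemma bdry_param_affine_on_interval:
  assumes "a0 < a1" "{a0<..<a1} \<inter> vertex_params V n w = {}"
  obtains A U where "\<And>s. s \<in> {a0..a1} \<Longrightarrow> bdry_param V n (w + s) = A + s *\<^sub>R U"
proof -
  obtain i \<beta> where "\<And>s. s \<in> {a0..a1} \<Longrightarrow>
      bdry_param V n (w + s) = V i + ((s - \<beta>) / edge_len V n i) *\<^sub>R E i"
    using bdry_param_on_edge_interval[OF assms] by metis
  then have "bdry_param V n (w + s) =
      (V i - (\<beta> / edge_len V n i) *\<^sub>R E i) + s *\<^sub>R ((1 / edge_len V n i) *\<^sub>R E i)"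
    if "s \<in> {a0..a1}" for s
    using that by (simp add: diff_divide_distrib algebra_simps)
  then show thesis using that by blast
qed

lemma bdry_param_not_on_swept_segment:
  assumes "a0 < a1" "{a0<..<a1} \<inter> vertex_params V n w = {}" "s \<in> {a0..a1}"
    and apart: "\<And>u. u \<in> {a0..s} \<Longrightarrow> y \<noteq> w + u \<and> \<bar>y - (w + u)\<bar> < L"
  shows "bdry_param V n y \<notin> closed_segment (bdry_param V n (w + a0)) (bdry_param V n (w + s))"
proof
  obtain A U where affine: "\<And>s. s \<in> {a0..a1} \<Longrightarrow> bdry_param V n (w + s) = A + s *\<^sub>R U"
    using bdry_param_affine_on_interval[OF assms(1,2)] by blast
  assume "bdry_param V n y \<in> closed_segment (bdry_param V n (w + a0)) (bdry_param V n (w + s))"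
  also have "\<dots> \<subseteq> (\<lambda>u. bdry_param V n (w + u)) ` {a0..s}"
    by (rule closed_segment_subset_affine_image) (use assms(3) affine in auto)
  finally obtain u where "u \<in> {a0..s}" "bdry_param V n y = bdry_param V n (w + u)" by blast
  then show False using apart bdry_param_eq_imp_eq by blast
qed

lemma finite_vertex_params: "finite ({0..L} \<inter> vertex_params V n w)"
proof -
  have "{0..L} \<inter> vertex_params V n w \<subseteq>
      (\<Union>k\<in>{..n}. (\<lambda>j. cum k + of_int j * L - w) ` {\<lceil>(w - cum k) / L\<rceil>..\<lfloor>(L + w - cum k) / L\<rfloor>})"
  proof
    fix s assume "s \<in> {0..L} \<inter> vertex_params V n w"
    then obtain k j where kj: "k \<le> n" "w + s = cum k + of_int j * L" "0 \<le> s" "s \<le> L"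
      by (auto simp: vertex_params_def)
    then have "(w - cum k) / L \<le> of_int j" "of_int j \<le> (L + w - cum k) / L"
      using perimeter_pos by (simp_all add: pos_divide_le_eq pos_le_divide_eq)
    then have "j \<in> {\<lceil>(w - cum k) / L\<rceil>..\<lfloor>(L + w - cum k) / L\<rfloor>}"
      by (simp add: ceiling_le_iff le_floor_iff)
    moreover have "s = cum k + of_int j * L - w" using kj by simp
    ultimately show "s \<in> (\<Union>k\<in>{..n}. (\<lambda>j. cum k + of_int j * L - w) `
        {\<lceil>(w - cum k) / L\<rceil>..\<lfloor>(L + w - cum k) / L\<rfloor>})"
      using kj(1) by blast
  qed
  then show ?thesis by (rule finite_subset) auto
qed

section \<open>The antipodal area difference\<close>

lemma area_diff_shift_along_edge:
  assumes "i < n" "j < n"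
    and p: "p = V i + l *\<^sub>R E i" and p': "p' = V i + l' *\<^sub>R E i" and q: "q = V j + m *\<^sub>R E j"
    and "0 \<le> l" "l \<le> l'" "l' \<le> 1" "0 \<le> m" "m \<le> 1"
    and "q \<notin> closed_segment p p'"
  shows "area_diff Q p' q - area_diff Q p q = cross2 (p' - p) (q - p)"
proof (rule area_diff_shift_start)
  have "cross2 (p' - p) (x - p) = (l' - l) * cross2 (E i) (x - V i)" for x
    unfolding p p' by (simp add: cross2_def algebra_simps)
  then show "(\<forall>x\<in>Q. cross2 (p' - p) (x - p) \<ge> 0) \<or> (\<forall>x\<in>Q. cross2 (p' - p) (x - p) \<le> 0)"
    using orientation polygon_region_left_of_edge[OF \<open>i < n\<close>] \<open>l \<le> l'\<close>
    by (auto simp: mult_nonneg_nonpos)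
  show "\<sigma> *\<^sub>R E j \<noteq> 0" using orientation edge_nonzero[OF \<open>j < n\<close>] by auto
  have "cross2 (\<sigma> *\<^sub>R E j) (x - q) = \<sigma> * cross2 (E j) (x - V j)" for x
    unfolding q by (simp add: cross2_def algebra_simps)
  then show "\<forall>x\<in>Q. cross2 (\<sigma> *\<^sub>R E j) (x - q) \<ge> 0"
    using polygon_region_left_of_edge[OF \<open>j < n\<close>] by simp
qed (use assms polygon_region_lmeasurable polygon_region_convex edge_point_in_polygon_region in auto)

lemma area_diff_shift_along_boundary:
  assumes "a0 < a1" "{a0<..<a1} \<inter> vertex_params V n w = {}" "s \<in> {a0..a1}"
    and "bdry_param V n y \<notin> closed_segment (bdry_param V n (w + a0)) (bdry_param V n (w + s))"
  shows "area_diff Q (bdry_param V n (w + s)) (bdry_param V n y)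
      - area_diff Q (bdry_param V n (w + a0)) (bdry_param V n y)
    = cross2 (bdry_param V n (w + s) - bdry_param V n (w + a0))
        (bdry_param V n y - bdry_param V n (w + a0))"
proof -
  obtain i \<beta> where i: "i < n" and on_i: "\<And>s. s \<in> {a0..a1} \<Longrightarrow> \<beta> \<le> s \<and> s \<le> \<beta> + edge_len V n i \<and>
      bdry_param V n (w + s) = V i + ((s - \<beta>) / edge_len V n i) *\<^sub>R E i"
    using bdry_param_on_edge_interval[OF assms(1,2)] by blast
  obtain j m where j: "j < n" "0 \<le> m" "m \<le> 1" "bdry_param V n y = V j + m *\<^sub>R E j"
    by (rule bdry_param_on_some_edge)
  define e where "e = edge_len V n i"
  have "e > 0" using edge_len_pos[OF i] by (simp add: e_def)
  have "a0 \<in> {a0..a1}" using assms(1) by simp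
  from on_i[OF this] on_i[OF assms(3)]
  have bounds: "\<beta> \<le> a0" "s \<le> \<beta> + e" "a0 \<le> s"
    and start: "bdry_param V n (w + a0) = V i + ((a0 - \<beta>) / e) *\<^sub>R E i"
    and stop: "bdry_param V n (w + s) = V i + ((s - \<beta>) / e) *\<^sub>R E i"
    using assms(3) by (auto simp: e_def)
  show ?thesis
    by (rule area_diff_shift_along_edge[OF i j(1) start stop j(4)])
      (use bounds j \<open>e > 0\<close> assms(4) in \<open>auto simp: divide_simps\<close>)
qed

text \<open>Pieces shorter than \<open>L/2\<close> keep each endpoint of the chord off the segment swept by the
  other, which the triangle argument needs.\<close>

lemma antipodal_area_diff_quadratic_on:
  assumes "a0 < a1" "a1 - a0 < L / 2"
    and no_vertex: "{a0<..<a1} \<inter> vertex_params V n w = {}"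
    and no_vertex': "{a0<..<a1} \<inter> vertex_params V n (w + L / 2) = {}"
  shows "\<exists>a b c. \<forall>s\<in>{a0..a1}. antipodal_area_diff V n w s = a + b * s + c * s\<^sup>2"
proof -
  define P P' where "P s = bdry_param V n (w + s)" and "P' s = bdry_param V n (w + L / 2 + s)" for s
  obtain A U where P: "\<And>s. s \<in> {a0..a1} \<Longrightarrow> P s = A + s *\<^sub>R U"
    using bdry_param_affine_on_interval[OF assms(1) no_vertex] unfolding P_def by blast
  obtain B W where P': "\<And>s. s \<in> {a0..a1} \<Longrightarrow> P' s = B + s *\<^sub>R W"
    using bdry_param_affine_on_interval[OF assms(1) no_vertex'] unfolding P'_def by blast
  have step: "antipodal_area_diff V n w s = area_diff Q (P a0) (P' a0)
      + cross2 (P s - P a0) (P' a0 - P a0) - cross2 (P' s - P' a0) (P s - P' a0)"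
    if s: "s \<in> {a0..a1}" for s
  proof -
    have "area_diff Q (P s) (P' a0) - area_diff Q (P a0) (P' a0) = cross2 (P s - P a0) (P' a0 - P a0)"
      unfolding P_def P'_def using s assms(2)
      by (intro area_diff_shift_along_boundary[OF assms(1) no_vertex s]
          bdry_param_not_on_swept_segment[OF assms(1) no_vertex s]) auto
    moreover have "area_diff Q (P' s) (P s) - area_diff Q (P' a0) (P s) = cross2 (P' s - P' a0) (P s - P' a0)"
      unfolding P_def P'_def using s assms(2)
      by (intro area_diff_shift_along_boundary[OF assms(1) no_vertex' s]
          bdry_param_not_on_swept_segment[OF assms(1) no_vertex' s]) auto
    moreover have "antipodal_area_diff V n w s = area_diff Q (P s) (P' s)"
      by (simp add: antipodal_area_diff_def P_def P'_def add_ac)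
    ultimately show ?thesis
      using area_diff_swap[of Q "P s" "P' s"] area_diff_swap[of Q "P s" "P' a0"] by linarith
  qed
  obtain a1' b1 c1 where quad1:
    "\<forall>s. cross2 ((A - P a0) + s *\<^sub>R U) ((P' a0 - P a0) + s *\<^sub>R 0) = a1' + b1 * s + c1 * s\<^sup>2"
    using cross2_affine_quadratic by blast
  obtain a2 b2 c2 where quad2:
    "\<forall>s. cross2 ((B - P' a0) + s *\<^sub>R W) ((A - P' a0) + s *\<^sub>R U) = a2 + b2 * s + c2 * s\<^sup>2"
    using cross2_affine_quadratic by blast
  have "antipodal_area_diff V n w s =
      (area_diff Q (P a0) (P' a0) + a1' - a2) + (b1 - b2) * s + (c1 - c2) * s\<^sup>2"
    if "s \<in> {a0..a1}" for s
  proof -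
    have "P s - P a0 = (A - P a0) + s *\<^sub>R U" "P' s - P' a0 = (B - P' a0) + s *\<^sub>R W"
      "P s - P' a0 = (A - P' a0) + s *\<^sub>R U"
      using P[OF that] P'[OF that] by (simp_all add: algebra_simps)
    then show ?thesis using step[OF that] quad1 quad2 by (simp add: algebra_simps)
  qed
  then show ?thesis by blast
qed

lemma antipodal_area_diff_periodic: "antipodal_area_diff V n w (s + L) = antipodal_area_diff V n w s"
  using bdry_param_periodic[of "w + s" 1] bdry_param_periodic[of "w + s + L / 2" 1]
  by (simp add: antipodal_area_diff_def algebra_simps)

lemma antipodal_area_diff_piecewise_quadratic:
  "\<exists>m t. t 0 = 0 \<and> t m = L \<and> (\<forall>k<m. t k < t (Suc k)) \<and>
     (\<forall>k<m. \<exists>a b c. \<forall>s\<in>{t k..t (Suc k)}. antipodal_area_diff V n w s = a + b * s + c * s\<^sup>2)"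
proof -
  define B where "B = {0, L / 3, 2 * L / 3, L} \<union> ({0..L} \<inter> vertex_params V n w)
    \<union> ({0..L} \<inter> vertex_params V n (w + L / 2))"
  have "finite B" "B \<subseteq> {0..L}" "0 \<in> B" "L \<in> B"
    using finite_vertex_params perimeter_pos by (auto simp: B_def)
  obtain t m where t: "t 0 = 0" "t m = L" "\<forall>k<m. t k < t (Suc k)" "\<forall>k\<le>m. t k \<in> B"
    and gap: "\<forall>k<m. \<forall>x\<in>B. \<not> (t k < x \<and> x < t (Suc k))"
    using finite_set_consecutive_enumeration[OF \<open>finite B\<close> \<open>B \<subseteq> {0..L}\<close> \<open>0 \<in> B\<close> \<open>L \<in> B\<close>]
    by blast
  have "\<exists>a b c. \<forall>s\<in>{t k..t (Suc k)}. antipodal_area_diff V n w s = a + b * s + c * s\<^sup>2"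
    if k: "k < m" for k
  proof (rule antipodal_area_diff_quadratic_on)
    have "t k \<in> {0..L}" "t (Suc k) \<in> {0..L}"
      using t(4) \<open>B \<subseteq> {0..L}\<close> k by (meson Suc_leI less_imp_le subsetD)+
    have "L / 3 \<in> B" "2 * L / 3 \<in> B" by (simp_all add: B_def)
    then have "\<not> (t k < L / 3 \<and> L / 3 < t (Suc k))" "\<not> (t k < 2 * L / 3 \<and> 2 * L / 3 < t (Suc k))"
      using gap k by blast+
    then show "t (Suc k) - t k < L / 2"
      using \<open>t k \<in> {0..L}\<close> \<open>t (Suc k) \<in> {0..L}\<close> perimeter_pos
      by (cases "t k < L / 3"; cases "t k < 2 * L / 3") (simp_all add: not_less)
    have "{t k<..<t (Suc k)} \<subseteq> {0..L} - B"
    proof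
      fix s assume "s \<in> {t k<..<t (Suc k)}"
      then show "s \<in> {0..L} - B"
        using gap k \<open>t k \<in> {0..L}\<close> \<open>t (Suc k) \<in> {0..L}\<close> by auto
    qed
    then show "{t k<..<t (Suc k)} \<inter> vertex_params V n w = {}"
      "{t k<..<t (Suc k)} \<inter> vertex_params V n (w + L / 2) = {}"
      unfolding B_def by blast+
  qed (use t(3) k in simp)
  then show ?thesis using t(1-3) by blast
qed

lemma continuous_antipodal_area_diff: "continuous_on UNIV (antipodal_area_diff V n w)"
proof (rule continuous_on_UNIV_if_periodic[OF perimeter_pos])
  show "antipodal_area_diff V n w (s + L) = antipodal_area_diff V n w s" for s
    by (rule antipodal_area_diff_periodic)
  obtain m t where t: "t 0 = 0" "t m = L" "\<forall>k<m. t k < t (Suc k)"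
    and quadratic: "\<forall>k<m. \<exists>a b c. \<forall>s\<in>{t k..t (Suc k)}. antipodal_area_diff V n w s = a + b * s + c * s\<^sup>2"
    using antipodal_area_diff_piecewise_quadratic by blast
  have "continuous_on {t k..t (Suc k)} (antipodal_area_diff V n w)" if k: "k < m" for k
  proof -
    obtain a b c where "\<forall>s\<in>{t k..t (Suc k)}. antipodal_area_diff V n w s = a + b * s + c * s\<^sup>2"
      using quadratic k by blast
    moreover have "continuous_on {t k..t (Suc k)} (\<lambda>s. a + b * s + c * s\<^sup>2)"
      by (intro continuous_intros)
    ultimately show ?thesis by (metis (no_types, lifting) continuous_on_cong)
  qed
  then show "continuous_on {0..L} (antipodal_area_diff V n w)"
    using continuous_on_chain_of_intervals[of m t "antipodal_area_diff V n w"] t by simp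
qed

end

theorem lemma1:
  fixes V :: "nat \<Rightarrow> real^2" and n :: nat and \<sigma> s0 :: real
    and P :: "real \<Rightarrow> real^2" and \<alpha> :: "real \<Rightarrow> real" and L :: real
  assumes "convex_polygon V n \<sigma>"
    and "L = perimeter V n"
    and "\<And>s. P s = bdry_param V n (s0 + s)"
    and "\<And>s. \<alpha> s = area_diff (polygon_region V n) (P s) (P (s + L / 2))"
  shows "continuous_on UNIV \<alpha> \<and>
    (\<exists>m t. t 0 = 0 \<and> t m = L \<and> (\<forall>k<m. t k < t (Suc k)) \<and>
       (\<forall>k<m. \<exists>a b c. \<forall>s\<in>{t k..t (Suc k)}. \<alpha> s = a + b * s + c * s\<^sup>2))"
proof -
  interpret convex_ngon V n \<sigma> by unfold_locales (rule assms(1))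
  have "\<alpha> = antipodal_area_diff V n s0"
    using assms(2-4) by (simp add: fun_eq_iff antipodal_area_diff_def add.assoc)
  then show ?thesis
    using continuous_antipodal_area_diff antipodal_area_diff_piecewise_quadratic assms(2) by simp
qed

end
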